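(* Let $q$ be an odd prime power, $g\ge 1$, and let $\mathcal{Y}$ be the hyperelliptic curve over $\mathbb{F}_q$ with affine equation $y^2=f(x)$, $f(x)=x^{2g+1}+a_{2g}x^{2g}+\dots+a_0\in\mathbb{F}_q[x]$, of genus $g$. Let $X,T$ be positive integers, let $\gamma=\#\{z\in\mathbb{F}_q: f(z)=0\}$, and let $J^{\mathcal{Y}}_{\max}$ be the largest integer $J$ for which there exist pairwise distinct $\lambda_1,\dots,\lambda_J\in\mathbb{F}_q$ with $f(\lambda_j)\ne0$ for all $j$ such that, setting $h=\prod_{j=1}^J(x-\lambda_j)$, the curve $\mathcal{Y}$ has at least $2J+X+T+6g+2$ affine $\mathbb{F}_q$-rational points $P$ with $y(P)\ne 0$ and $h(P)\ne0$. Then $$J^{\mathcal{Y}}_{\max}=\begin{cases}\left\lfloor\dfrac{2q-(X+T+6g+2\gamma+2)}{4}\right\rfloor & \text{if } \#\mathcal{Y}(\mathbb{F}_q)\ge q+3g+\dfrac{X+T+4}{2},\\[2mm] \left\lfloor\dfrac{\#\mathcal{Y}(\mathbb{F}_q)-(X+T+6g+3+\gamma)}{2}\right\rfloor & \text{otherwise.}\end{cases}$$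
   Context: $\#\mathcal{Y}(\mathbb{F}_q)$ counts all $\mathbb{F}_q$-rational points of (the non-singular model of) $\mathcal{Y}$, including its unique point at infinity $P_\infty$. Interpretation: in the known XSTPIR construction from hyperelliptic curves, with $L=2J-g$ and $N=L+X+T+6g+2$, one needs $N+g=2J+X+T+6g+2$ rational points different from $P_\infty$, not on $y=0$ and not zeros of $h$; this yields an $X$-secure $T$-private PIR scheme of rate $L/N$, so $J^{\mathcal{Y}}_{\max}$ determines the maximal rate of that construction. *)

theory Defs
  imports "HOL-Computational_Algebra.Computational_Algebra"
begin

definition affine_points :: "'a::field poly \<Rightarrow> ('a \<times> 'a) set" where
  "affine_points f = {(x, y). y ^ 2 = poly f x}"

text \<open>Number of F_q-rational points of the nonsingular model: affine points plus
  the unique point at infinity (degree of f is odd).\<close>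
definition num_points :: "'a::{field,finite} poly \<Rightarrow> nat" where
  "num_points f = card (affine_points f) + 1"

definition admissible_J :: "'a::{field,finite} poly \<Rightarrow> nat \<Rightarrow> nat \<Rightarrow> nat \<Rightarrow> nat \<Rightarrow> bool" where
  "admissible_J f g X T J \<longleftrightarrow>
     (\<exists>L::'a set. card L = J \<and> (\<forall>l\<in>L. poly f l \<noteq> 0) \<and>
        card {(x, y). (x, y) \<in> affine_points f \<and> y \<noteq> 0 \<and> (\<Prod>l\<in>L. x - l) \<noteq> 0}
          \<ge> 2 * J + X + T + 6 * g + 2)"

end

theory Submission
  imports Defs
begin

text \<open>Since q is odd, the fibre of y^2 = f(x) above x has 1, 2 or 0 points according as
  f(x) is zero, a nonzero square or a non-square. With \<gamma>, s and n the numbers of such x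
  we get q = \<gamma> + s + n and #Y(F_q) = \<gamma> + 2s + 1. Deleting the fibre above a non-square value
  of f loses no point with y \<noteq> 0 and deleting it above a square value loses two, so the best
  choice of \<lambda>'s uses the non-square values first, and J is admissible iff 2J + K \<le> 2s and
  4J + K \<le> 2s + 2n, where K = X + T + 6g + 2. The two cases of the formula are the two terms
  of the resulting minimum.\<close>

lemma two_neq_zero_if_odd_card:
  assumes "odd (card (UNIV :: 'a::{field,finite} set))"
  shows "(2::'a) \<noteq> 0"
proof
  assume two: "(2::'a) = 0"
  let ?q = "card (UNIV :: 'a set)"
  have "(\<Sum>x\<in>(UNIV::'a set). x) = (\<Sum>x\<in>UNIV. x + 1)"
    by (rule sum.reindex_bij_witness[of _ "\<lambda>y. y + 1" "\<lambda>y. y - 1"]) auto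
  also have "\<dots> = (\<Sum>x\<in>(UNIV::'a set). x) + of_nat ?q"
    by (simp add: sum.distrib)
  finally have q_zero: "(of_nat ?q :: 'a) = 0" by simp
  obtain k where "?q = 2 * k + 1" using assms oddE by blast
  then have "(of_nat ?q :: 'a) = 1" using two by simp
  with q_zero show False by simp
qed

lemma card_square_roots:
  fixes c :: "'a::field"
  assumes "(2::'a) \<noteq> 0" "c \<noteq> 0"
  shows "card {y. y ^ 2 = c} = (if \<exists>y. y ^ 2 = c then 2 else 0)"
proof (cases "\<exists>y. y ^ 2 = c")
  case True
  then obtain y0 where y0: "y0 ^ 2 = c" by blast
  have "{y. y ^ 2 = c} = {y0, -y0}"
    using y0 power2_eq_iff[of _ y0] by auto
  moreover have "y0 \<noteq> -y0"
  proof
    assume "y0 = - y0"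
    then have "2 * y0 = 0" by (simp add: algebra_simps)
    with assms y0 show False by simp
  qed
  ultimately show ?thesis using True by simp
qed simp

definition square_locus :: "'a::field poly \<Rightarrow> 'a set" where
  "square_locus f = {x. poly f x \<noteq> 0 \<and> (\<exists>y. y ^ 2 = poly f x)}"

definition nonsquare_locus :: "'a::field poly \<Rightarrow> 'a set" where
  "nonsquare_locus f = {x. poly f x \<noteq> 0 \<and> \<not> (\<exists>y. y ^ 2 = poly f x)}"

lemma square_locus_nonsquare_locus_disjoint: "square_locus f \<inter> nonsquare_locus f = {}"
  by (auto simp: square_locus_def nonsquare_locus_def)

lemma square_locus_Un_nonsquare_locus:
  "square_locus f \<union> nonsquare_locus f = {x. poly f x \<noteq> 0}"
  by (auto simp: square_locus_def nonsquare_locus_def)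

lemma card_UNIV_eq_roots_squares_nonsquares:
  "card (UNIV :: 'a::{field,finite} set) =
     card {z::'a. poly f z = 0} + card (square_locus f) + card (nonsquare_locus f)"
proof -
  have "UNIV = {z::'a. poly f z = 0} \<union> (square_locus f \<union> nonsquare_locus f)"
    by (auto simp: square_locus_Un_nonsquare_locus)
  also have "card \<dots> = card {z::'a. poly f z = 0} + card (square_locus f \<union> nonsquare_locus f)"
    by (rule card_Un_disjoint) (auto simp: square_locus_Un_nonsquare_locus)
  also have "card (square_locus f \<union> nonsquare_locus f) =
      card (square_locus f) + card (nonsquare_locus f)"
    using square_locus_nonsquare_locus_disjoint[of f] by (simp add: card_Un_disjoint)
  finally show ?thesis by simp
qed

lemma card_fibre:
  fixes f :: "'a::field poly"
  assumes "(2::'a) \<noteq> 0"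
  shows "card {y. y ^ 2 = poly f x} =
    of_bool (poly f x = 0) + 2 * of_bool (x \<in> square_locus f)"
proof (cases "poly f x = 0")
  case True
  then have "{y. y ^ 2 = poly f x} = {0}" by auto
  then show ?thesis using True by (simp add: square_locus_def)
qed (simp add: card_square_roots[OF assms] square_locus_def)

lemma affine_points_eq_Sigma: "affine_points f = Sigma UNIV (\<lambda>x. {y. y ^ 2 = poly f x})"
  by (auto simp: affine_points_def)

lemma num_points_eq:
  fixes f :: "'a::{field,finite} poly"
  assumes "(2::'a) \<noteq> 0"
  shows "num_points f = card {z. poly f z = 0} + 2 * card (square_locus f) + 1"
proof -
  have "card (affine_points f) = (\<Sum>x\<in>UNIV. card {y. y ^ 2 = poly f x})"
    unfolding affine_points_eq_Sigma by (rule card_SigmaI) auto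
  also have "\<dots> = card {z. poly f z = 0} + 2 * card (square_locus f)"
    by (simp add: card_fibre[OF assms] sum.distrib sum_distrib_left sum_of_bool_eq)
  finally show ?thesis by (simp add: num_points_def)
qed

lemma card_affine_points_y_nonzero_x_notin:
  fixes f :: "'a::{field,finite} poly"
  assumes "(2::'a) \<noteq> 0"
  shows "card {(x, y). (x, y) \<in> affine_points f \<and> y \<noteq> 0 \<and> (\<Prod>l\<in>L. x - l) \<noteq> 0}
    = 2 * card (square_locus f - L)"
proof -
  have "{(x, y). (x, y) \<in> affine_points f \<and> y \<noteq> 0 \<and> (\<Prod>l\<in>L. x - l) \<noteq> 0}
      = Sigma (square_locus f - L) (\<lambda>x. {y. y ^ 2 = poly f x})"
    by (auto simp: affine_points_def square_locus_def)
  also have "card \<dots> = (\<Sum>x\<in>square_locus f - L. card {y. y ^ 2 = poly f x})"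
    by (rule card_SigmaI) auto
  also have "\<dots> = (\<Sum>x\<in>square_locus f - L. 2)"
    by (rule sum.cong) (auto simp: card_fibre[OF assms] square_locus_def)
  finally show ?thesis by simp
qed

lemma card_Diff_le_of_subset_Un:
  assumes "finite S" "finite M" "L \<subseteq> S \<union> M"
  shows "card (S - L) \<le> card S - (card L - card M)"
proof -
  have "finite L" using assms finite_subset by blast
  have "card L \<le> card (L \<inter> S) + card (L \<inter> M)"
    using assms \<open>finite L\<close> card_Un_le[of "L \<inter> S" "L \<inter> M"]
    by (metis Int_Un_distrib Int_absorb2)
  moreover have "card (L \<inter> M) \<le> card M"
    using assms by (simp add: card_mono)
  moreover have "card (S - L) = card S - card (L \<inter> S)"
    using assms by (metis card_Diff_subset_Int finite_Int Int_commute)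
  ultimately show ?thesis by linarith
qed

lemma exists_subset_Un_card_Diff:
  assumes "finite S" "finite M" "S \<inter> M = {}" "J \<le> card S + card M"
  obtains L where "L \<subseteq> S \<union> M" "card L = J" "card (S - L) = card S - (J - card M)"
proof -
  obtain A where A: "A \<subseteq> M" "card A = min J (card M)"
    using obtain_subset_with_card_n[of "min J (card M)" M] by auto
  have "J - card M \<le> card S" using assms(4) by linarith
  then obtain B where B: "B \<subseteq> S" "card B = J - card M"
    using obtain_subset_with_card_n by metis
  have "card (A \<union> B) = J"
    using assms A B card_Un_disjoint[of A B] finite_subset by fastforce
  moreover have "S - (A \<union> B) = S - B" using A assms(3) by auto
  moreover have "card (S - B) = card S - (J - card M)"
    using assms B by (simp add: card_Diff_subset finite_subset)
  ultimately show ?thesis using A B that[of "A \<union> B"] by auto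
qed

lemma admissible_J_iff:
  fixes f :: "'a::{field,finite} poly" and g X T J :: nat
  assumes "(2::'a) \<noteq> 0"
  defines "s \<equiv> card (square_locus f)" and "n \<equiv> card (nonsquare_locus f)"
    and "K \<equiv> X + T + 6 * g + 2"
  shows "admissible_J f g X T J \<longleftrightarrow> 2 * J + K \<le> 2 * s \<and> 4 * J + K \<le> 2 * s + 2 * n"
proof -
  let ?S = "square_locus f" and ?M = "nonsquare_locus f"
  have nonroots: "(\<forall>l\<in>L. poly f l \<noteq> 0) \<longleftrightarrow> L \<subseteq> ?S \<union> ?M" for L
    by (auto simp: square_locus_Un_nonsquare_locus)
  have "admissible_J f g X T J \<longleftrightarrow>
      (\<exists>L. L \<subseteq> ?S \<union> ?M \<and> card L = J \<and> 2 * J + K \<le> 2 * card (?S - L))"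
    unfolding admissible_J_def card_affine_points_y_nonzero_x_notin[OF assms(1)] nonroots
      K_def by (auto simp: add.assoc)
  also have "\<dots> \<longleftrightarrow> J \<le> s + n \<and> 2 * J + K \<le> 2 * (s - (J - n))"
  proof
    assume "\<exists>L. L \<subseteq> ?S \<union> ?M \<and> card L = J \<and> 2 * J + K \<le> 2 * card (?S - L)"
    then obtain L where L: "L \<subseteq> ?S \<union> ?M" "card L = J" "2 * J + K \<le> 2 * card (?S - L)"
      by blast
    have "J \<le> s + n"
      using L card_mono[OF _ L(1)] card_Un_le[of ?S ?M] unfolding s_def n_def by fastforce
    moreover have "card (?S - L) \<le> s - (J - n)"
      using card_Diff_le_of_subset_Un[OF _ _ L(1)] L(2) unfolding s_def n_def by simp
    ultimately show "J \<le> s + n \<and> 2 * J + K \<le> 2 * (s - (J - n))" using L(3) by linarith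
  next
    assume J: "J \<le> s + n \<and> 2 * J + K \<le> 2 * (s - (J - n))"
    then obtain L where "L \<subseteq> ?S \<union> ?M" "card L = J" "card (?S - L) = s - (J - n)"
      using exists_subset_Un_card_Diff[of ?S ?M J] square_locus_nonsquare_locus_disjoint[of f]
      unfolding s_def n_def by auto
    with J show "\<exists>L. L \<subseteq> ?S \<union> ?M \<and> card L = J \<and> 2 * J + K \<le> 2 * card (?S - L)" by auto
  qed
  also have "\<dots> \<longleftrightarrow> 2 * J + K \<le> 2 * s \<and> 4 * J + K \<le> 2 * s + 2 * n"
    by linarith
  finally show ?thesis .
qed

lemma greatest_nat_with_two_bounds:
  fixes a b m :: nat
  assumes "2 * m \<le> a" "4 * m \<le> b" and "\<forall>j. 2 * j \<le> a \<and> 4 * j \<le> b \<longrightarrow> j \<le> m"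
  shows "m = min (a div 2) (b div 4)"
proof -
  have "2 * min (a div 2) (b div 4) \<le> a" "4 * min (a div 2) (b div 4) \<le> b"
    by linarith+
  then have "min (a div 2) (b div 4) \<le> m" using assms(3) by blast
  with assms(1,2) show ?thesis by linarith
qed

lemma min_half_quarter_eq:
  fixes a n :: nat
  shows "min (a div 2) ((a + 2 * n) div 4) = (if 2 * n \<le> a then (a + 2 * n) div 4 else a div 2)"
proof -
  have "(2 * a) div 4 = a div 2" by simp
  then show ?thesis
    by (auto simp: min_def intro: div_le_mono le_trans[OF _ div_le_mono] dest: div_le_mono[of _ _ 4])
qed

lemma floor_real_diff_div:
  "b \<le> a \<Longrightarrow> \<lfloor>(real a - real b) / real d\<rfloor> = int ((a - b) div d)"
  by (metis floor_divide_of_nat_eq of_nat_diff)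

lemma case_formula_eq_min:
  fixes \<gamma> s n g X T :: nat
  defines "K \<equiv> X + T + 6 * g + 2"
  assumes "K \<le> 2 * s"
  shows "(if real (\<gamma> + 2 * s + 1) \<ge>
        real (\<gamma> + s + n) + 3 * real g + (real X + real T + 4) / 2
     then \<lfloor>(2 * real (\<gamma> + s + n) - (real X + real T + 6 * real g + 2 * real \<gamma> + 2)) / 4\<rfloor>
     else \<lfloor>(real (\<gamma> + 2 * s + 1) - (real X + real T + 6 * real g + 3 + real \<gamma>)) / 2\<rfloor>)
    = int (min ((2 * s - K) div 2) ((2 * s + 2 * n - K) div 4))"
proof -
  have "real (\<gamma> + 2 * s + 1) \<ge> real (\<gamma> + s + n) + 3 * real g + (real X + real T + 4) / 2
      \<longleftrightarrow> real (K + 2 * n) \<le> real (2 * s)"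
    unfolding K_def by (simp add: field_simps)
  then have cond: "real (\<gamma> + 2 * s + 1) \<ge> real (\<gamma> + s + n) + 3 * real g + (real X + real T + 4) / 2
      \<longleftrightarrow> 2 * n \<le> 2 * s - K"
    using assms(2) by linarith
  have eq1: "2 * real (\<gamma> + s + n) - (real X + real T + 6 * real g + 2 * real \<gamma> + 2)
      = real (2 * s + 2 * n) - real K"
    unfolding K_def by simp
  have first: "\<lfloor>(2 * real (\<gamma> + s + n) - (real X + real T + 6 * real g + 2 * real \<gamma> + 2)) / 4\<rfloor>
      = int ((2 * s - K + 2 * n) div 4)"
    unfolding eq1 using assms(2) floor_real_diff_div[of K "2 * s + 2 * n" 4] by simp
  have eq2: "real (\<gamma> + 2 * s + 1) - (real X + real T + 6 * real g + 3 + real \<gamma>)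
      = real (2 * s) - real K"
    unfolding K_def by simp
  have second: "\<lfloor>(real (\<gamma> + 2 * s + 1) - (real X + real T + 6 * real g + 3 + real \<gamma>)) / 2\<rfloor>
      = int ((2 * s - K) div 2)"
    unfolding eq2 using assms(2) floor_real_diff_div[of K "2 * s" 2] by simp
  have reassoc: "2 * s + 2 * n - K = 2 * s - K + 2 * n" using assms(2) by simp
  show ?thesis
    unfolding cond first second reassoc min_half_quarter_eq by (simp only: if_distrib[of int])
qed

theorem theorem4p4:
  fixes f :: "'a::{field,finite} poly"
    and g X T Jmax :: nat
  assumes q_odd: "odd (card (UNIV :: 'a set))"
    and g_pos: "g \<ge> 1"
    and f_monic: "lead_coeff f = 1"
    and f_deg: "degree f = 2 * g + 1"
    and f_sqfree: "squarefree f"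
    and X_pos: "X > 0" and T_pos: "T > 0"
    and Jmax_adm: "admissible_J f g X T Jmax"
    and Jmax_greatest: "\<forall>J. admissible_J f g X T J \<longrightarrow> J \<le> Jmax"
  shows "int Jmax =
    (let q = card (UNIV :: 'a set); \<gamma> = card {z::'a. poly f z = 0}; N = num_points f in
     if real N \<ge> real q + 3 * real g + (real X + real T + 4) / 2
     then \<lfloor>(2 * real q - (real X + real T + 6 * real g + 2 * real \<gamma> + 2)) / 4\<rfloor>
     else \<lfloor>(real N - (real X + real T + 6 * real g + 3 + real \<gamma>)) / 2\<rfloor>)"
proof -
  have two: "(2::'a) \<noteq> 0" using two_neq_zero_if_odd_card[OF q_odd] .
  define \<gamma> s n K where "\<gamma> = card {z::'a. poly f z = 0}" and "s = card (square_locus f)"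
    and "n = card (nonsquare_locus f)" and "K = X + T + 6 * g + 2"
  have q: "card (UNIV :: 'a set) = \<gamma> + s + n"
    unfolding \<gamma>_def s_def n_def by (rule card_UNIV_eq_roots_squares_nonsquares)
  have N: "num_points f = \<gamma> + 2 * s + 1"
    unfolding \<gamma>_def s_def using num_points_eq[OF two] .
  note adm = admissible_J_iff[OF two, where f = f and g = g and X = X and T = T,
      folded s_def n_def K_def]
  have "K \<le> 2 * s" using Jmax_adm adm by simp
  have "Jmax = min ((2 * s - K) div 2) ((2 * s + 2 * n - K) div 4)"
  proof (rule greatest_nat_with_two_bounds)
    show "2 * Jmax \<le> 2 * s - K" "4 * Jmax \<le> 2 * s + 2 * n - K"
      using Jmax_adm adm by auto
    show "\<forall>j. 2 * j \<le> 2 * s - K \<and> 4 * j \<le> 2 * s + 2 * n - K \<longrightarrow> j \<le> Jmax"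
    proof (intro allI impI)
      fix j
      assume "2 * j \<le> 2 * s - K \<and> 4 * j \<le> 2 * s + 2 * n - K"
      with \<open>K \<le> 2 * s\<close> have "admissible_J f g X T j" unfolding adm by linarith
      with Jmax_greatest show "j \<le> Jmax" by blast
    qed
  qed
  with case_formula_eq_min[of X T g s \<gamma> n, folded K_def, OF \<open>K \<le> 2 * s\<close>] show ?thesis
    unfolding Let_def q N \<gamma>_def[symmetric] by (simp only:)
qed

end
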